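(* Let $A \in \mathbb{R}^{m \times r}$, $b \in \mathbb{R}^m$, and $P = \{ x \in \mathbb{R}^r \mid Ax \ge b\}$. Then $P$ has only finitely many convex-conformally non-decomposable vectors.
   Context: For $x \in \mathbb{R}^n$, $\operatorname{sign}(x) \in \{-,0,+\}^n$ is obtained by applying the sign function componentwise; the relations $0<-$, $0<+$ induce a componentwise partial order on $\{-,0,+\}^n$. A vector $x \in P$ is convex-conformally non-decomposable if for all $x^1,x^2 \in P$ with $\operatorname{sign}(x^1),\operatorname{sign}(x^2) \le \operatorname{sign}(x)$ and all $0<\lambda<1$, $x = \lambda x^1 + (1-\lambda)x^2$ implies $x^1 = x^2$. *)

theory Defs
  imports "HOL-Analysis.Analysis"
begin

text \<open>Sign vectors: sign x is the componentwise sign, with values -1, 0, 1 standing for -, 0, +.\<close>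
definition sign_vec :: "real ^ 'n \<Rightarrow> real ^ 'n" where
  "sign_vec x = (\<chi> i. sgn (x $ i))"

text \<open>Componentwise partial order on sign vectors induced by 0 < - and 0 < +.\<close>
definition sign_le :: "real ^ 'n \<Rightarrow> real ^ 'n \<Rightarrow> bool" where
  "sign_le s t \<longleftrightarrow> (\<forall>i. s $ i = 0 \<or> s $ i = t $ i)"

definition cc_nondecomposable :: "(real ^ 'n) set \<Rightarrow> real ^ 'n \<Rightarrow> bool" where
  "cc_nondecomposable P x \<longleftrightarrow> x \<in> P \<and>
     (\<forall>x1\<in>P. \<forall>x2\<in>P. \<forall>l::real.
        sign_le (sign_vec x1) (sign_vec x) \<and> sign_le (sign_vec x2) (sign_vec x) \<and>
        0 < l \<and> l < 1 \<and> x = l *\<^sub>R x1 + (1 - l) *\<^sub>R x2 \<longrightarrow> x1 = x2)"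

end

theory Submission
  imports Defs
begin

text \<open>A convex-conformally non-decomposable vector x of P is an extreme point of the polyhedron
  P \<inter> O, where O is the closed orthant of vectors whose sign vector is conformal to that of x.
  There are only finitely many sign vectors, and each of the polyhedra P \<inter> O has only finitely
  many extreme points.\<close>

definition conformal_orthant :: "real ^ 'n \<Rightarrow> (real ^ 'n) set" where
  "conformal_orthant s = {y. sign_le (sign_vec y) s}"

lemma finite_range_sign_vec: "finite (range (sign_vec :: real ^ 'n \<Rightarrow> real ^ 'n))"
proof -
  have "range (sign_vec :: real ^ 'n \<Rightarrow> real ^ 'n) \<subseteq> vec_lambda ` (UNIV \<rightarrow>\<^sub>E {-1, 0, 1})"
  proof
    fix v :: "real ^ 'n"
    assume "v \<in> range sign_vec"
    then have "(\<lambda>i. v $ i) \<in> UNIV \<rightarrow>\<^sub>E {-1, 0, 1}"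
      by (auto simp: sign_vec_def sgn_if split: if_splits)
    then show "v \<in> vec_lambda ` (UNIV \<rightarrow>\<^sub>E {-1, 0, 1})"
      by (metis image_eqI vec_lambda_eta)
  qed
  then show ?thesis
    by (rule finite_subset) (intro finite_imageI finite_PiE; simp)
qed

lemma polyhedron_conformal_orthant:
  fixes s :: "real ^ 'n"
  shows "polyhedron (conformal_orthant s)"
proof -
  define C where "C i = {y :: real ^ 'n. sgn (y $ i) = 0 \<or> sgn (y $ i) = s $ i}" for i
  have orthant_eq: "conformal_orthant s = (\<Inter>i. C i)"
    by (auto simp: conformal_orthant_def C_def sign_le_def sign_vec_def)
  have "polyhedron (C i)" for i
  proof -
    have coord: "y $ i = axis i 1 \<bullet> y" for y :: "real ^ 'n"
      by (simp add: cart_eq_inner_axis inner_commute)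
    consider "s $ i = 1" | "s $ i = -1" | "s $ i \<noteq> 1" "s $ i \<noteq> -1" by blast
    then show ?thesis
    proof cases
      case 1
      then have "C i = {y. axis i 1 \<bullet> y \<ge> 0}" by (auto simp: C_def sgn_if coord[symmetric])
      then show ?thesis by (simp add: polyhedron_halfspace_ge)
    next
      case 2
      then have "C i = {y. axis i 1 \<bullet> y \<le> 0}" by (auto simp: C_def sgn_if coord[symmetric])
      then show ?thesis by (simp add: polyhedron_halfspace_le)
    next
      case 3
      then have "C i = {y. axis i 1 \<bullet> y = 0}" by (auto simp: C_def sgn_if coord[symmetric])
      then show ?thesis by (simp add: polyhedron_hyperplane)
    qed
  qed
  then show ?thesis
    unfolding orthant_eq by (intro polyhedron_Inter) auto
qed

lemma polyhedron_matrix_ge: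
  fixes A :: "real ^ 'r ^ 'm" and b :: "real ^ 'm"
  shows "polyhedron {x. \<forall>i. (A *v x) $ i \<ge> b $ i}"
proof -
  have "{x. \<forall>i. (A *v x) $ i \<ge> b $ i} = (\<Inter>i. {x. A $ i \<bullet> x \<ge> b $ i})"
    by (auto simp: matrix_vector_mult_def inner_vec_def mult.commute)
  then show ?thesis
    by (auto intro: polyhedron_Inter polyhedron_halfspace_ge)
qed

lemma cc_nondecomposable_imp_extreme_point:
  assumes "cc_nondecomposable P x"
  shows "x extreme_point_of (P \<inter> conformal_orthant (sign_vec x))"
  unfolding extreme_point_of_def
proof (intro conjI ballI)
  show "x \<in> P \<inter> conformal_orthant (sign_vec x)"
    using assms by (simp add: cc_nondecomposable_def conformal_orthant_def sign_le_def)
next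
  fix a c
  assume a: "a \<in> P \<inter> conformal_orthant (sign_vec x)"
    and c: "c \<in> P \<inter> conformal_orthant (sign_vec x)"
  show "x \<notin> open_segment a c"
  proof
    assume "x \<in> open_segment a c"
    then obtain u where "a \<noteq> c" "0 < u" "u < 1"
      "x = (1 - u) *\<^sub>R a + (1 - (1 - u)) *\<^sub>R c"
      by (auto simp: in_segment)
    moreover have "sign_le (sign_vec a) (sign_vec x)" "sign_le (sign_vec c) (sign_vec x)"
      using a c by (simp_all add: conformal_orthant_def)
    moreover have "a \<in> P" "c \<in> P" "0 < 1 - u" "1 - u < 1"
      using a c \<open>0 < u\<close> \<open>u < 1\<close> by simp_all
    ultimately show False
      using assms unfolding cc_nondecomposable_def by blast
  qed
qed

lemma finite_cc_nondecomposable: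
  assumes "polyhedron P"
  shows "finite {x. cc_nondecomposable P x}"
proof (rule finite_subset)
  show "{x. cc_nondecomposable P x}
      \<subseteq> (\<Union>s\<in>range sign_vec. {v. v extreme_point_of (P \<inter> conformal_orthant s)})"
    using cc_nondecomposable_imp_extreme_point by blast
  show "finite (\<Union>s\<in>range sign_vec. {v. v extreme_point_of (P \<inter> conformal_orthant s)})"
    using assms
    by (intro finite_UN_I finite_range_sign_vec finite_polyhedron_extreme_points
        polyhedron_Int polyhedron_conformal_orthant)
qed

theorem proposition5:
  fixes A :: "real ^ 'r ^ 'm" and b :: "real ^ 'm" and P :: "(real ^ 'r) set"
  assumes "P = {x. \<forall>i. (A *v x) $ i \<ge> b $ i}"
  shows "finite {x. cc_nondecomposable P x}"
  using assms by (simp add: finite_cc_nondecomposable polyhedron_matrix_ge)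

end
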